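(* Let $k\in\,]0,2]$. Then the functional $$f\mapsto\Psi(f)=\int_{\mathbb R^3}\int_{\mathbb R^3}e^{\lambda_f}\chi(f)\,dx\,dv$$ is convex (on the convex set of measurable spherically symmetric $f\ge0$ with finite mass for which $2m_f(r)/r<1$ for all $r>0$).
   Context: $\chi(s)=\frac{k}{k+1}s^{1+1/k}$. A measurable $f\ge0$ on $\mathbb R^3\times\mathbb R^3$ is spherically symmetric if $f(Ax,Av)=f(x,v)$ for all $A\in SO(3)$. Its mass is $\int\int\sqrt{1+|v|^2}f\,dx\,dv$, its mass function $m_f(r)=\int_{|x|\le r}\int\sqrt{1+|v|^2}f\,dx\,dv$, and $\lambda_f$ is defined by $e^{-2\lambda_f(r)}=1-\frac{2m_f(r)}{r}$, evaluated at $r=|x|$. *)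

theory Defs
  imports "HOL-Analysis.Analysis"
begin

type_synonym phase_fn = "real^3 \<Rightarrow> real^3 \<Rightarrow> real"

definition chi :: "real \<Rightarrow> real \<Rightarrow> real" where
  "chi k s = k / (k + 1) * s powr (1 + 1 / k)"

definition SO3 :: "(real^3^3) set" where
  "SO3 = {A. orthogonal_matrix A \<and> det A = 1}"

definition spherically_symmetric :: "phase_fn \<Rightarrow> bool" where
  "spherically_symmetric f \<longleftrightarrow> (\<forall>A\<in>SO3. \<forall>x v. f (A *v x) (A *v v) = f x v)"

definition mass :: "phase_fn \<Rightarrow> ennreal" where
  "mass f = (\<integral>\<^sup>+ p. ennreal (sqrt (1 + (norm (snd p))\<^sup>2) * f (fst p) (snd p)) \<partial>lebesgue)"

definition mass_fun :: "phase_fn \<Rightarrow> real \<Rightarrow> real" where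
  "mass_fun f r = enn2real (\<integral>\<^sup>+ p. ennreal (sqrt (1 + (norm (snd p))\<^sup>2) * f (fst p) (snd p))
       * indicator {p. norm (fst p) \<le> r} p \<partial>lebesgue)"

definition lambda_f :: "phase_fn \<Rightarrow> real \<Rightarrow> real" where
  "lambda_f f r = - ln (1 - 2 * mass_fun f r / r) / 2"

definition admissible :: "phase_fn set" where
  "admissible = {f. (\<lambda>p. f (fst p) (snd p)) \<in> borel_measurable lebesgue
      \<and> (\<forall>x v. f x v \<ge> 0) \<and> spherically_symmetric f \<and> mass f < \<infinity>
      \<and> (\<forall>r>0. 2 * mass_fun f r / r < 1)}"

definition Psi :: "real \<Rightarrow> phase_fn \<Rightarrow> ennreal" where
  "Psi k f = (\<integral>\<^sup>+ p. ennreal (exp (lambda_f f (norm (fst p))) * chi k (f (fst p) (snd p))) \<partial>lebesgue)"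

end

theory Submission
  imports Defs
begin

text \<open>
  Let p = 1 + 1/k and r = |x|. Since exp (lambda_f f r) = b^(-1/2) with b = 1 - 2 m_f(r)/r, the
  integrand of Psi k f at (x, v) is k/(k+1) s^p b^(-1/2) with s = f(x, v). As m_f is linear in f,
  both s and b depend affinely on f. The map (s, b) |-> s^p b^(-c) is jointly convex on
  [0, oo) x (0, oo) whenever p >= 1 + c, because by the weighted AM-GM inequality it lies above its
  tangent planes; for c = 1/2 the condition p >= 3/2 is exactly k <= 2. So the integrand is
  pointwise convex in f, and integrating gives the convexity of Psi.
\<close>

lemma weighted_am_gm_powr_mult_powr_neg:
  fixes x y c p :: real
  assumes "x \<ge> 0" and "y > 0" and "c \<ge> 0" and "p \<ge> 1 + c"
  shows "p * x \<le> x powr p * y powr (-c) + c * y + (p - 1 - c)"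
proof (cases "x = 0")
  case True
  then show ?thesis using assms by simp
next
  case False
  then have x: "x > 0" using assms by simp
  define A where "A = x powr p * y powr (-c)"
  have A: "A > 0" using x assms by (simp add: A_def)
  have ln_A: "ln A = p * ln x - c * ln y"
    using x assms by (simp add: A_def ln_mult ln_powr)
  have "0 = ln (A/x) + c * ln (y/x) + (p - 1 - c) * ln (1/x)"
    using A x assms ln_A by (simp add: ln_div algebra_simps)
  also have "\<dots> \<le> (A/x - 1) + c * (y/x - 1) + (p - 1 - c) * (1/x - 1)"
    using A x assms by (intro add_mono mult_left_mono ln_le_minus_one) auto
  finally have "0 \<le> x * ((A/x - 1) + c * (y/x - 1) + (p - 1 - c) * (1/x - 1))"
    using x by simp
  also have "\<dots> = A + c * y + (p - 1 - c) - p * x"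
    using x by (simp add: field_simps)
  finally show ?thesis unfolding A_def by simp
qed

lemma powr_mult_powr_neg_above_tangent:
  fixes s b s' b' c p :: real
  assumes "s > 0" and "b > 0" and "s' \<ge> 0" and "b' > 0" and "c \<ge> 0" and "p \<ge> 1 + c"
  defines "K \<equiv> s powr p * b powr (-c)"
  shows "K + p * K * ((s' - s) / s) - c * K * ((b' - b) / b) \<le> s' powr p * b' powr (-c)"
proof -
  have K: "K > 0" using assms by (simp add: K_def)
  have "1 + p * ((s' - s) / s) - c * ((b' - b) / b) \<le> (s'/s) powr p * (b'/b) powr (-c)"
    using weighted_am_gm_powr_mult_powr_neg[of "s'/s" "b'/b" c p] assms
    by (simp add: diff_divide_distrib algebra_simps)
  from mult_left_mono[OF this, of K] K
  have "K * (1 + p * ((s' - s) / s) - c * ((b' - b) / b)) \<le> K * ((s'/s) powr p * (b'/b) powr (-c))"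
    by simp
  also have "\<dots> = s' powr p * b' powr (-c)"
    using assms by (simp add: K_def powr_divide powr_minus divide_simps)
  finally show ?thesis by (simp add: algebra_simps)
qed

lemma convex_on_powr_mult_powr_neg:
  fixes c p :: real
  assumes "c \<ge> 0" and "p \<ge> 1 + c"
  shows "convex_on ({0..} \<times> {0<..}) (\<lambda>(s, b). s powr p * b powr (-c))"
proof (rule convex_onI)
  show "convex ({0..} \<times> {0<..} :: (real \<times> real) set)"
    by (intro convex_Times convex_real_interval)
next
  fix t :: real and z1 z2 :: "real \<times> real"
  assume t: "0 < t" "t < 1" and z1: "z1 \<in> {0..} \<times> {0<..}" and z2: "z2 \<in> {0..} \<times> {0<..}"
  obtain s1 b1 s2 b2 where z: "z1 = (s1, b1)" "z2 = (s2, b2)" by fastforce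
  have s12: "s1 \<ge> 0" "s2 \<ge> 0" and b12: "b1 > 0" "b2 > 0" using z1 z2 z by auto
  define s where "s = (1 - t) * s1 + t * s2"
  define b where "b = (1 - t) * b1 + t * b2"
  have b: "b > 0" unfolding b_def using t b12 by (intro add_pos_pos) auto
  have "s powr p * b powr (-c) \<le> (1 - t) * (s1 powr p * b1 powr (-c)) + t * (s2 powr p * b2 powr (-c))"
  proof (cases "s = 0")
    case True
    then show ?thesis using t s12 b12 by simp
  next
    case False
    moreover have "s \<ge> 0" using t s12 unfolding s_def by simp
    ultimately have s: "s > 0" by simp
    define K where "K = s powr p * b powr (-c)"
    note tangent1 = powr_mult_powr_neg_above_tangent[OF s b s12(1) b12(1) assms, folded K_def]
    note tangent2 = powr_mult_powr_neg_above_tangent[OF s b s12(2) b12(2) assms, folded K_def]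
    have "(1 - t) * ((s1 - s) / s) + t * ((s2 - s) / s) = 0"
      using s unfolding s_def by (simp add: field_simps)
    moreover have "(1 - t) * ((b1 - b) / b) + t * ((b2 - b) / b) = 0"
      using b unfolding b_def by (simp add: field_simps)
    ultimately have "K = K + p * K * ((1 - t) * ((s1 - s) / s) + t * ((s2 - s) / s))
                         - c * K * ((1 - t) * ((b1 - b) / b) + t * ((b2 - b) / b))"
      by simp
    also have "\<dots> = (1 - t) * (K + p * K * ((s1 - s) / s) - c * K * ((b1 - b) / b))
                   + t * (K + p * K * ((s2 - s) / s) - c * K * ((b2 - b) / b))"
      by (simp add: algebra_simps)
    also have "\<dots> \<le> (1 - t) * (s1 powr p * b1 powr (-c)) + t * (s2 powr p * b2 powr (-c))"
      using tangent1 tangent2 t by (intro add_mono mult_left_mono) auto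
    finally show ?thesis unfolding K_def .
  qed
  then show "(\<lambda>(s, b). s powr p * b powr (-c)) ((1 - t) *\<^sub>R z1 + t *\<^sub>R z2)
      \<le> (1 - t) * (\<lambda>(s, b). s powr p * b powr (-c)) z1 + t * (\<lambda>(s, b). s powr p * b powr (-c)) z2"
    by (simp add: z s_def b_def)
qed

abbreviation convex_comb :: "real \<Rightarrow> phase_fn \<Rightarrow> phase_fn \<Rightarrow> phase_fn" where
  "convex_comb t f g \<equiv> \<lambda>x v. t * f x v + (1 - t) * g x v"

lemma
  assumes "f \<in> admissible"
  shows admissible_measurable: "(\<lambda>p. f (fst p) (snd p)) \<in> borel_measurable lebesgue"
    and admissible_nonneg: "f x v \<ge> 0"
    and admissible_symmetric: "spherically_symmetric f"
    and admissible_mass_finite: "mass f < \<infinity>"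
    and admissible_subcritical: "r > 0 \<Longrightarrow> 2 * mass_fun f r / r < 1"
  using assms by (auto simp: admissible_def)

lemma norm_fst_measurable [measurable]:
  "(\<lambda>p::(real^3) \<times> (real^3). norm (fst p)) \<in> borel_measurable lebesgue"
  by (rule measurable_completion, simp, intro borel_measurable_continuous_onI continuous_intros)

lemma energy_measurable [measurable]:
  "(\<lambda>p::(real^3) \<times> (real^3). sqrt (1 + (norm (snd p))\<^sup>2)) \<in> borel_measurable lebesgue"
  by (rule measurable_completion, simp, intro borel_measurable_continuous_onI continuous_intros)

lemma ennreal_convex_comb:
  assumes "0 \<le> t" and "t \<le> 1" and "0 \<le> a" and "0 \<le> b"
  shows "ennreal (t * a + (1 - t) * b) = ennreal t * ennreal a + ennreal (1 - t) * ennreal b"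
  using assms by (simp add: ennreal_mult)

lemma nn_integral_linear_comb:
  fixes F G :: "'a \<Rightarrow> ennreal"
  assumes "F \<in> borel_measurable M" and "G \<in> borel_measurable M"
  shows "(\<integral>\<^sup>+x. a * F x + b * G x \<partial>M) = a * integral\<^sup>N M F + b * integral\<^sup>N M G"
  using assms by (simp add: nn_integral_add nn_integral_cmult)

lemma weighted_mass_convex_comb:
  fixes W :: "(real^3) \<times> (real^3) \<Rightarrow> ennreal"
  assumes f: "f \<in> admissible" and g: "g \<in> admissible" and t: "0 \<le> t" "t \<le> 1"
    and W: "W \<in> borel_measurable lebesgue"
  shows "(\<integral>\<^sup>+p. ennreal (sqrt (1 + (norm (snd p))\<^sup>2) * convex_comb t f g (fst p) (snd p)) * W p \<partial>lebesgue)
    = ennreal t * (\<integral>\<^sup>+p. ennreal (sqrt (1 + (norm (snd p))\<^sup>2) * f (fst p) (snd p)) * W p \<partial>lebesgue)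
      + ennreal (1 - t) * (\<integral>\<^sup>+p. ennreal (sqrt (1 + (norm (snd p))\<^sup>2) * g (fst p) (snd p)) * W p \<partial>lebesgue)"
proof -
  have "ennreal (sqrt (1 + (norm (snd p))\<^sup>2) * convex_comb t f g (fst p) (snd p)) * W p
     = ennreal t * (ennreal (sqrt (1 + (norm (snd p))\<^sup>2) * f (fst p) (snd p)) * W p)
       + ennreal (1 - t) * (ennreal (sqrt (1 + (norm (snd p))\<^sup>2) * g (fst p) (snd p)) * W p)" for p
    using ennreal_convex_comb[OF t, of "sqrt (1 + (norm (snd p))\<^sup>2) * f (fst p) (snd p)"
        "sqrt (1 + (norm (snd p))\<^sup>2) * g (fst p) (snd p)"]
      admissible_nonneg[OF f] admissible_nonneg[OF g]
    by (simp add: algebra_simps)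
  then show ?thesis
    using admissible_measurable[OF f] admissible_measurable[OF g] W
    by (simp only:) (rule nn_integral_linear_comb; measurable)
qed

lemma mass_convex_comb:
  assumes "f \<in> admissible" and "g \<in> admissible" and "0 \<le> t" and "t \<le> 1"
  shows "mass (convex_comb t f g) = ennreal t * mass f + ennreal (1 - t) * mass g"
  using weighted_mass_convex_comb[OF assms, of "\<lambda>_. 1"] unfolding mass_def by simp

definition mass_in_ball :: "phase_fn \<Rightarrow> real \<Rightarrow> ennreal" where
  "mass_in_ball f r = (\<integral>\<^sup>+p. ennreal (sqrt (1 + (norm (snd p))\<^sup>2) * f (fst p) (snd p))
       * indicator {p. norm (fst p) \<le> r} p \<partial>lebesgue)"

lemma mass_fun_eq_mass_in_ball: "mass_fun f r = enn2real (mass_in_ball f r)"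
  by (simp add: mass_fun_def mass_in_ball_def)

lemma mass_in_ball_mono: "r \<le> s \<Longrightarrow> mass_in_ball f r \<le> mass_in_ball f s"
  unfolding mass_in_ball_def by (intro nn_integral_mono mult_left_mono) (auto simp: indicator_def)

lemma mass_in_ball_le_mass: "mass_in_ball f r \<le> mass f"
  unfolding mass_in_ball_def mass_def by (intro nn_integral_mono) (auto simp: indicator_def)

lemma mass_in_ball_finite: "f \<in> admissible \<Longrightarrow> mass_in_ball f r < \<infinity>"
  using mass_in_ball_le_mass[of f r] admissible_mass_finite[of f] by simp

lemma mass_fun_convex_comb:
  assumes f: "f \<in> admissible" and g: "g \<in> admissible" and t: "0 \<le> t" "t \<le> 1"
  shows "mass_fun (convex_comb t f g) r = t * mass_fun f r + (1 - t) * mass_fun g r"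
  unfolding mass_fun_eq_mass_in_ball mass_in_ball_def
  using weighted_mass_convex_comb[OF f g t, of "indicator {p. norm (fst p) \<le> r}"]
    mass_in_ball_finite[OF f, of r] mass_in_ball_finite[OF g, of r] t
  by (simp add: mass_in_ball_def enn2real_plus enn2real_mult ennreal_mult_less_top)

lemma mass_fun_mono:
  assumes "f \<in> admissible"
  shows "mono (mass_fun f)"
  using mass_in_ball_mono mass_in_ball_finite[OF assms]
  by (auto intro!: monoI simp: mass_fun_eq_mass_in_ball enn2real_mono)

lemma lambda_f_measurable:
  assumes "f \<in> admissible"
  shows "lambda_f f \<in> borel_measurable borel"
  using borel_measurable_mono[OF mass_fun_mono[OF assms]] unfolding lambda_f_def[abs_def] by measurable

text \<open>The case r = 0 holds only because 2 m_f(0) / 0 = 0 in HOL.\<close>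

lemma admissible_metric_factor_pos:
  assumes "f \<in> admissible" and "r \<ge> 0"
  shows "1 - 2 * mass_fun f r / r > 0"
proof (cases "r = 0")
  case False
  then show ?thesis using admissible_subcritical[OF assms(1), of r] assms(2) by linarith
qed simp

lemma exp_lambda_f:
  assumes "f \<in> admissible" and "r \<ge> 0"
  shows "exp (lambda_f f r) = (1 - 2 * mass_fun f r / r) powr (-(1/2))"
proof -
  have nonzero: "1 - 2 * mass_fun f r / r \<noteq> 0"
    using admissible_metric_factor_pos[OF assms] by linarith
  show ?thesis unfolding lambda_f_def powr_def if_not_P[OF nonzero] by simp
qed

lemma admissible_convex_comb:
  assumes f: "f \<in> admissible" and g: "g \<in> admissible" and t: "0 \<le> t" "t \<le> 1"
  shows "convex_comb t f g \<in> admissible"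
proof -
  have "(\<lambda>p. convex_comb t f g (fst p) (snd p)) \<in> borel_measurable lebesgue"
    using admissible_measurable[OF f] admissible_measurable[OF g] by measurable
  moreover have "\<forall>x v. convex_comb t f g x v \<ge> 0"
    using admissible_nonneg[OF f] admissible_nonneg[OF g] t by simp
  moreover have "spherically_symmetric (convex_comb t f g)"
    using admissible_symmetric[OF f] admissible_symmetric[OF g]
    by (simp add: spherically_symmetric_def)
  moreover have "mass (convex_comb t f g) < \<infinity>"
    using admissible_mass_finite[OF f] admissible_mass_finite[OF g]
    by (simp add: mass_convex_comb[OF f g t] ennreal_mult_less_top)
  moreover have "2 * mass_fun (convex_comb t f g) r / r < 1" if r: "r > 0" for r
  proof -
    have "2 * mass_fun f r < r" and "2 * mass_fun g r < r"
      using admissible_subcritical[OF f r] admissible_subcritical[OF g r] r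
      by (simp_all add: divide_less_eq)
    then have "t * (2 * mass_fun f r) + (1 - t) * (2 * mass_fun g r) < t * r + (1 - t) * r"
    proof (cases "t = 0")
      case False
      with \<open>2 * mass_fun f r < r\<close> \<open>2 * mass_fun g r < r\<close> t show ?thesis
        by (intro add_less_le_mono mult_strict_left_mono mult_left_mono) auto
    qed simp
    then show ?thesis
      unfolding mass_fun_convex_comb[OF f g t] using r by (simp add: divide_less_eq algebra_simps)
  qed
  ultimately show ?thesis unfolding admissible_def by blast
qed

definition Psi_integrand :: "real \<Rightarrow> phase_fn \<Rightarrow> (real^3) \<times> (real^3) \<Rightarrow> ennreal" where
  "Psi_integrand k f p = ennreal (exp (lambda_f f (norm (fst p))) * chi k (f (fst p) (snd p)))"

lemma Psi_eq_integral: "Psi k f = (\<integral>\<^sup>+p. Psi_integrand k f p \<partial>lebesgue)"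
  by (simp add: Psi_def Psi_integrand_def)

lemma Psi_integrand_measurable:
  assumes "f \<in> admissible"
  shows "Psi_integrand k f \<in> borel_measurable lebesgue"
  using admissible_measurable[OF assms] lambda_f_measurable[OF assms]
  unfolding Psi_integrand_def[abs_def] chi_def by measurable

lemma chi_nonneg: "0 < k \<Longrightarrow> 0 \<le> s \<Longrightarrow> 0 \<le> chi k s"
  by (simp add: chi_def)

lemma Psi_integrand_convex_comb_real:
  assumes f: "f \<in> admissible" and g: "g \<in> admissible" and t: "0 \<le> t" "t \<le> 1"
    and k: "0 < k" "k \<le> 2"
  shows "exp (lambda_f (convex_comb t f g) (norm x)) * chi k (convex_comb t f g x v)
    \<le> t * (exp (lambda_f f (norm x)) * chi k (f x v)) + (1 - t) * (exp (lambda_f g (norm x)) * chi k (g x v))"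
proof -
  define r where "r = norm x"
  define b\<^sub>f where "b\<^sub>f = 1 - 2 * mass_fun f r / r"
  define b\<^sub>g where "b\<^sub>g = 1 - 2 * mass_fun g r / r"
  define p where "p = 1 + 1/k"
  let ?F = "\<lambda>(s, b). s powr p * b powr (-(1/2))"
  have r: "r \<ge> 0" unfolding r_def by simp
  have b: "b\<^sub>f > 0" "b\<^sub>g > 0"
    unfolding b\<^sub>f_def b\<^sub>g_def using admissible_metric_factor_pos[OF f r] admissible_metric_factor_pos[OF g r] .
  have b_comb: "1 - 2 * mass_fun (convex_comb t f g) r / r = t * b\<^sub>f + (1 - t) * b\<^sub>g"
    unfolding mass_fun_convex_comb[OF f g t] b\<^sub>f_def b\<^sub>g_def by (simp add: diff_divide_distrib add_divide_distrib algebra_simps)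
  have "1 + 1/2 \<le> p" using k by (simp add: p_def divide_simps)
  then have "convex_on ({0..} \<times> {0<..}) ?F"
    by (intro convex_on_powr_mult_powr_neg) auto
  then have "?F (t *\<^sub>R (f x v, b\<^sub>f) + (1 - t) *\<^sub>R (g x v, b\<^sub>g)) \<le> t * ?F (f x v, b\<^sub>f) + (1 - t) * ?F (g x v, b\<^sub>g)"
    using t b admissible_nonneg[OF f] admissible_nonneg[OF g] unfolding convex_on_def by simp
  then have convex: "(convex_comb t f g x v) powr p * (t * b\<^sub>f + (1 - t) * b\<^sub>g) powr (-(1/2))
      \<le> t * (f x v powr p * b\<^sub>f powr (-(1/2))) + (1 - t) * (g x v powr p * b\<^sub>g powr (-(1/2)))"
    by simp
  have "exp (lambda_f (convex_comb t f g) r) * chi k (convex_comb t f g x v)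
      = k / (k + 1) * ((convex_comb t f g x v) powr p * (t * b\<^sub>f + (1 - t) * b\<^sub>g) powr (-(1/2)))"
    unfolding exp_lambda_f[OF admissible_convex_comb[OF f g t] r] b_comb chi_def p_def by simp
  also have "\<dots> \<le> k / (k + 1) * (t * (f x v powr p * b\<^sub>f powr (-(1/2))) + (1 - t) * (g x v powr p * b\<^sub>g powr (-(1/2))))"
    using convex k by (intro mult_left_mono) auto
  also have "\<dots> = t * (exp (lambda_f f r) * chi k (f x v)) + (1 - t) * (exp (lambda_f g r) * chi k (g x v))"
    unfolding exp_lambda_f[OF f r] exp_lambda_f[OF g r] chi_def p_def b\<^sub>f_def b\<^sub>g_def
    by (simp add: distrib_left mult_ac)
  finally show ?thesis unfolding r_def .
qed

lemma Psi_integrand_convex_comb: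
  assumes f: "f \<in> admissible" and g: "g \<in> admissible" and t: "0 \<le> t" "t \<le> 1"
    and k: "0 < k" "k \<le> 2"
  shows "Psi_integrand k (convex_comb t f g) p
    \<le> ennreal t * Psi_integrand k f p + ennreal (1 - t) * Psi_integrand k g p"
proof -
  let ?A = "exp (lambda_f f (norm (fst p))) * chi k (f (fst p) (snd p))"
  let ?B = "exp (lambda_f g (norm (fst p))) * chi k (g (fst p) (snd p))"
  have "Psi_integrand k (convex_comb t f g) p \<le> ennreal (t * ?A + (1 - t) * ?B)"
    unfolding Psi_integrand_def by (intro ennreal_leI Psi_integrand_convex_comb_real[OF assms])
  also have "\<dots> = ennreal t * ennreal ?A + ennreal (1 - t) * ennreal ?B"
    using chi_nonneg[OF k(1) admissible_nonneg[OF f]] chi_nonneg[OF k(1) admissible_nonneg[OF g]]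
    by (intro ennreal_convex_comb[OF t]) auto
  finally show ?thesis unfolding Psi_integrand_def .
qed

theorem lemma9p1:
  fixes k :: real
  assumes "0 < k" and "k \<le> 2"
  shows "\<forall>f\<in>admissible. \<forall>g\<in>admissible. \<forall>t::real. 0 \<le> t \<and> t \<le> 1 \<longrightarrow>
           (\<lambda>x v. t * f x v + (1 - t) * g x v) \<in> admissible \<and>
           Psi k (\<lambda>x v. t * f x v + (1 - t) * g x v)
             \<le> ennreal t * Psi k f + ennreal (1 - t) * Psi k g"
proof (intro ballI allI impI conjI)
  fix f g and t :: real
  assume f: "f \<in> admissible" and g: "g \<in> admissible" and "0 \<le> t \<and> t \<le> 1"
  then have t: "0 \<le> t" "t \<le> 1" by auto
  show "convex_comb t f g \<in> admissible" using admissible_convex_comb[OF f g t] .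
  have "Psi k (convex_comb t f g)
      \<le> (\<integral>\<^sup>+p. ennreal t * Psi_integrand k f p + ennreal (1 - t) * Psi_integrand k g p \<partial>lebesgue)"
    unfolding Psi_eq_integral by (intro nn_integral_mono Psi_integrand_convex_comb[OF f g t assms])
  also have "\<dots> = ennreal t * Psi k f + ennreal (1 - t) * Psi k g"
    unfolding Psi_eq_integral
    by (intro nn_integral_linear_comb Psi_integrand_measurable f g)
  finally show "Psi k (convex_comb t f g) \<le> ennreal t * Psi k f + ennreal (1 - t) * Psi k g" .
qed

end
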